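(* Let $A,B$ be nonzero finite-dimensional $K$-subspaces of $L$. Then there exist a $K$-subspace $S$ of $\langle AB\rangle$ and a (possibly skew) subfield $H$ of $L$ with $K\subset H\subset L$ and $\dim_KH$ finite, such that $$\dim_KS\geq\dim_KA+\dim_KB-\dim_KH,$$ and either $HS=S$ or $SH=S$.
   Context: $K$ is a commutative field and $L$ is a (possibly noncommutative) division ring containing $K$ in its center. For $S\subset L$, $\langle S\rangle$ denotes the $K$-subspace of $L$ spanned by $S$. For subsets $S_1,S_2$ of $L$, $S_1S_2=\{s_1s_2\mid s_1\in S_1,s_2\in S_2\}$ (product set). *)

theory Defs
  imports Complex_Main
begin

text \<open>The field K is a type 'k, embedded into the division ring L (type 'l) by a
  ring homomorphism emb whose image is central in L.  L is a K-vector space via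
  left multiplication by emb k (equal to right multiplication since emb k is central).\<close>

definition central_field_emb :: "('k::field \<Rightarrow> 'l::division_ring) \<Rightarrow> bool" where
  "central_field_emb emb \<longleftrightarrow>
     emb 1 = 1 \<and> (\<forall>a b. emb (a + b) = emb a + emb b) \<and> (\<forall>a b. emb (a * b) = emb a * emb b)
     \<and> (\<forall>a x. emb a * x = x * emb a)"

definition kscale :: "('k::field \<Rightarrow> 'l::division_ring) \<Rightarrow> 'k \<Rightarrow> 'l \<Rightarrow> 'l" where
  "kscale emb k x = emb k * x"

definition setmult :: "'l::times set \<Rightarrow> 'l set \<Rightarrow> 'l set" where
  "setmult S1 S2 = {s1 * s2 | s1 s2. s1 \<in> S1 \<and> s2 \<in> S2}"

definition kfindim :: "('k::field \<Rightarrow> 'l::division_ring) \<Rightarrow> 'l set \<Rightarrow> bool" where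
  "kfindim emb V \<longleftrightarrow> module.subspace (kscale emb) V \<and>
     (\<exists>F. finite F \<and> module.span (kscale emb) F = V)"

definition sub_division_ring_over :: "('k::field \<Rightarrow> 'l::division_ring) \<Rightarrow> 'l set \<Rightarrow> bool" where
  "sub_division_ring_over emb H \<longleftrightarrow>
     range emb \<subseteq> H \<and> 0 \<in> H \<and> 1 \<in> H \<and>
     (\<forall>x\<in>H. \<forall>y\<in>H. x + y \<in> H \<and> x * y \<in> H) \<and>
     (\<forall>x\<in>H. - x \<in> H) \<and> (\<forall>x\<in>H. x \<noteq> 0 \<longrightarrow> inverse x \<in> H)"

end

theory Submission
  imports Defs
begin

text \<open>
  A linear analogue of Kneser's addition theorem (Hou, Leung and Xiang).  Call a pair (A, B) of
  nonzero finite-dimensional K-subspaces admissible for a finite-dimensional space C if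
  \<open>AB \<subseteq> C\<close>.  For every admissible pair we find a finite-dimensional subspace S of C and a
  finite-dimensional division ring H over K with \<open>HS = S\<close> or \<open>SH = S\<close> and
  \<open>dim A + dim B \<le> dim S + dim H\<close>; the theorem is the case \<open>C = \<langle>AB\<rangle>\<close>.

  The proof is a well-founded induction, pairs with larger \<open>dim A + dim B\<close> (or equal sum and
  smaller \<open>dim B\<close>) coming first.  If \<open>Ag \<subseteq> A\<close> whenever \<open>gB \<inter> B \<noteq> 0\<close>, then \<open>S = Ab\<close> and its
  right stabilizer work; if \<open>Ag \<subseteq> A\<close> whenever \<open>Ag \<inter> A \<noteq> 0\<close>, then \<open>S = \<langle>AB\<rangle>\<close> and its left
  stabilizer work.  Otherwise the e-transforms of (A, B) by suitable g1 and g2 keep products in C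
  and, by the modular inequality for dimensions, do not lose total dimension; the induction
  hypothesis then forces both \<open>dim A < dim B\<close> and \<open>dim B < dim A\<close>.
\<close>

section \<open>Product sets, stabilizers and e-transforms\<close>

definition sum_space :: "'a::plus set \<Rightarrow> 'a set \<Rightarrow> 'a set" where
  "sum_space S T = {x + y | x y. x \<in> S \<and> y \<in> T}"

lemma setmultI: "x \<in> X \<Longrightarrow> y \<in> Y \<Longrightarrow> x * y \<in> setmult X Y"
  unfolding setmult_def by blast

definition right_stabilizer :: "'a::times set \<Rightarrow> 'a set" where
  "right_stabilizer S = {x. \<forall>s\<in>S. s * x \<in> S}"

definition left_stabilizer :: "'a::times set \<Rightarrow> 'a set" where
  "left_stabilizer S = {x. \<forall>s\<in>S. x * s \<in> S}"

lemma setmult_right_stabilizer: "setmult S (right_stabilizer S) = (S :: 'a::monoid_mult set)"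
proof
  show "setmult S (right_stabilizer S) \<subseteq> S" unfolding setmult_def right_stabilizer_def by blast
  have "s = s * 1" "1 \<in> right_stabilizer S" for s :: 'a unfolding right_stabilizer_def by simp_all
  then show "S \<subseteq> setmult S (right_stabilizer S)" unfolding setmult_def by blast
qed

lemma setmult_left_stabilizer: "setmult (left_stabilizer S) S = (S :: 'a::monoid_mult set)"
proof
  show "setmult (left_stabilizer S) S \<subseteq> S" unfolding setmult_def left_stabilizer_def by blast
  have "s = 1 * s" "1 \<in> left_stabilizer S" for s :: 'a unfolding left_stabilizer_def by simp_all
  then show "S \<subseteq> setmult (left_stabilizer S) S" unfolding setmult_def by blast
qed

text \<open>The two halves of the e-transform of a pair (A, B) by an element g, as in Kneser's
  addition theorem: (A + Ag, {y \<in> B. gy \<in> B}) and ({x \<in> A. xg \<in> A}, B + gB).\<close>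
definition ext_right :: "'a::{plus,times} set \<Rightarrow> 'a \<Rightarrow> 'a set" where
  "ext_right A g = sum_space A ((\<lambda>a. a * g) ` A)"

definition restr_left :: "'a::times set \<Rightarrow> 'a \<Rightarrow> 'a set" where
  "restr_left B g = {y \<in> B. g * y \<in> B}"

definition restr_right :: "'a::times set \<Rightarrow> 'a \<Rightarrow> 'a set" where
  "restr_right A g = {x \<in> A. x * g \<in> A}"

definition ext_left :: "'a::{plus,times} set \<Rightarrow> 'a \<Rightarrow> 'a set" where
  "ext_left B g = sum_space B ((\<lambda>b. g * b) ` B)"

text \<open>If \<open>Ag \<subseteq> A\<close> whenever \<open>gb \<in> B\<close> for a nonzero \<open>b \<in> B\<close>, then \<open>b\<^sup>-\<^sup>1B\<close> stabilizes Ab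
  from the right: \<open>xb \<cdot> b\<^sup>-\<^sup>1y = (x \<cdot> yb\<^sup>-\<^sup>1) b\<close>.\<close>
lemma right_stabilizer_of_stable:
  fixes A B :: "'a::division_ring set"
  assumes b: "b \<in> B" "b \<noteq> 0"
    and stable: "\<And>g. restr_left B g \<noteq> {0} \<Longrightarrow> restr_right A g = A"
  shows "(\<lambda>y. inverse b * y) ` B \<subseteq> right_stabilizer ((\<lambda>x. x * b) ` A)"
proof (clarsimp simp: right_stabilizer_def)
  fix y x assume y: "y \<in> B" and x: "x \<in> A"
  define g where "g = y * inverse b"
  have gb: "g * b = y" using b(2) unfolding g_def by (simp add: mult.assoc)
  then have "b \<in> restr_left B g" using b(1) y unfolding restr_left_def by simp
  then have "restr_right A g = A" using stable b(2) by blast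
  then have "x * g \<in> A" using x unfolding restr_right_def by blast
  moreover have "x * b * (inverse b * y) = (x * g) * b"
  proof -
    have "b * (inverse b * y) = y" using b(2) by (simp flip: mult.assoc)
    then show ?thesis using gb by (simp add: mult.assoc)
  qed
  ultimately show "x * b * (inverse b * y) \<in> (\<lambda>x. x * b) ` A" by (metis image_eqI)
qed

text \<open>If \<open>Ag \<subseteq> A\<close> whenever \<open>ag \<in> A\<close> for a nonzero \<open>a \<in> A\<close>, then \<open>Aa\<^sup>-\<^sup>1\<close> stabilizes AB
  from the left: \<open>xa\<^sup>-\<^sup>1 \<cdot> yc = (x \<cdot> a\<^sup>-\<^sup>1y) c\<close>.\<close>
lemma left_stabilizer_of_stable:
  fixes A B :: "'a::division_ring set"
  assumes a: "a \<in> A" "a \<noteq> 0"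
    and stable: "\<And>g. restr_right A g \<noteq> {0} \<Longrightarrow> restr_right A g = A"
  shows "(\<lambda>x. x * inverse a) ` A \<subseteq> left_stabilizer (setmult A B)"
proof (clarsimp simp: left_stabilizer_def)
  fix x z assume x: "x \<in> A" and "z \<in> setmult A B"
  then obtain y c where z: "z = y * c" and y: "y \<in> A" and c: "c \<in> B"
    unfolding setmult_def by blast
  define g where "g = inverse a * y"
  have "a * g = y" using a(2) unfolding g_def by (simp flip: mult.assoc)
  then have "a \<in> restr_right A g" using a(1) y unfolding restr_right_def by simp
  then have "restr_right A g = A" using stable a(2) by blast
  then have "x * g \<in> A" using x unfolding restr_right_def by blast
  then have "(x * g) * c \<in> setmult A B" using c by (rule setmultI)
  then show "x * inverse a * z \<in> setmult A B" unfolding z g_def by (simp add: mult.assoc)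
qed

section \<open>Finite-dimensional subspaces of L\<close>

text \<open>The library's dimension theory for
  finite-dimensional vector spaces assumes the whole space is finite-dimensional, so the facts needed
  below are derived here for finite-dimensional subspaces.\<close>
locale division_algebra_over =
  fixes emb :: "'k::field \<Rightarrow> 'l::division_ring"
  assumes central_emb: "central_field_emb emb"
begin

lemma emb_1: "emb 1 = 1"
  and emb_add: "emb (a + b) = emb a + emb b"
  and emb_mult: "emb (a * b) = emb a * emb b"
  and emb_central: "emb a * x = x * emb a"
  using central_emb unfolding central_field_emb_def by blast+

sublocale V: vector_space "kscale emb"
  unfolding vector_space_def kscale_def
  by (auto simp: distrib_left distrib_right emb_add emb_mult emb_1 mult.assoc)

lemma kfindim_subspace: "kfindim emb X \<Longrightarrow> V.subspace X"
  unfolding kfindim_def by blast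

lemma kfindim_basis:
  assumes "kfindim emb X"
  obtains B where "finite B" "B \<subseteq> X" "V.independent B" "V.span B = X" "card B = V.dim X"
proof -
  obtain F where F: "finite F" "V.span F = X" using assms unfolding kfindim_def by blast
  obtain B where B: "B \<subseteq> X" "V.independent B" "X \<subseteq> V.span B" "card B = V.dim X"
    using V.basis_exists[of X] by metis
  have "finite B" using V.independent_span_bound[OF F(1) B(2)] B(1) F(2) by blast
  moreover have "V.span B = X"
    using V.span_subspace[OF B(1,3) kfindim_subspace[OF assms]] .
  ultimately show ?thesis using B that by blast
qed

lemma independent_card_le_dim:
  assumes "kfindim emb W" "V.independent I" "I \<subseteq> W"
  shows "finite I \<and> card I \<le> V.dim W"
proof -
  obtain B where "finite B" "V.span B = W" "card B = V.dim W"
    using kfindim_basis[OF assms(1)] by blast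
  then show ?thesis using V.independent_span_bound[of B I] assms(2,3) by metis
qed

lemma dim_mono:
  assumes "kfindim emb W" "X \<subseteq> W"
  shows "V.dim X \<le> V.dim W"
proof -
  obtain B where "finite B" "V.span B = W" "card B = V.dim W"
    using kfindim_basis[OF assms(1)] by blast
  then show ?thesis using V.dim_le_card[of X B] assms(2) by metis
qed

lemma kfindim_subset:
  assumes "kfindim emb W" "V.subspace X" "X \<subseteq> W"
  shows "kfindim emb X"
proof -
  obtain B where B: "B \<subseteq> X" "V.independent B" "X \<subseteq> V.span B"
    using V.basis_exists[of X] by metis
  have "finite B" using independent_card_le_dim[OF assms(1) B(2) order_trans[OF B(1) assms(3)]] ..
  moreover have "V.span B = X" using V.span_subspace[OF B(1,3) assms(2)] .
  ultimately show ?thesis unfolding kfindim_def using assms(2) by blast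
qed

lemma subspace_eq_of_dim_le:
  assumes "kfindim emb T" "V.subspace S" "S \<subseteq> T" "V.dim T \<le> V.dim S"
  shows "S = T"
proof -
  obtain B where B: "B \<subseteq> S" "V.independent B" "S \<subseteq> V.span B" "card B = V.dim S"
    using V.basis_exists[of S] by metis
  obtain B' where B': "B \<subseteq> B'" "B' \<subseteq> T" "V.independent B'" "T \<subseteq> V.span B'"
    using V.maximal_independent_subset_extend[of B T] B assms(3) by blast
  have "finite B'" "card B' \<le> V.dim T"
    using independent_card_le_dim[OF assms(1) B'(3,2)] by auto
  then have "B = B'" using card_seteq[of B' B] B'(1) B(4) assms(4) by simp
  then have "T \<subseteq> S" using B'(4) V.span_minimal[OF B(1) assms(2)] by blast
  with assms(3) show ?thesis by blast
qed

lemma dim_less_of_psubset: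
  assumes "kfindim emb T" "V.subspace S" "S \<subset> T"
  shows "V.dim S < V.dim T"
proof (rule ccontr)
  assume "\<not> V.dim S < V.dim T"
  then have "S = T" using subspace_eq_of_dim_le[OF assms(1,2)] assms(3) by simp
  with assms(3) show False by simp
qed

lemma dim_pos_iff:
  assumes "kfindim emb X"
  shows "X \<noteq> {0} \<longleftrightarrow> 0 < V.dim X"
proof
  assume "X \<noteq> {0}"
  obtain B where "finite B" "V.span B = X" "card B = V.dim X"
    using kfindim_basis[OF assms] .
  with \<open>X \<noteq> {0}\<close> show "0 < V.dim X" by (metis V.span_empty card_0_eq gr0I)
next
  have "V.dim {0} = 0"
    using V.dim_span[of "{}"] V.dim_eq_card_independent[OF V.independent_empty] by simp
  then show "0 < V.dim X \<Longrightarrow> X \<noteq> {0}" by auto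
qed

lemma nonzero_elem:
  assumes "V.subspace X" "X \<noteq> {0}"
  obtains x where "x \<in> X" "x \<noteq> 0"
  using assms V.subspace_0 by blast

lemma kfindim_image:
  assumes f: "module_hom (kscale emb) (kscale emb) f" and X: "kfindim emb X"
  shows "kfindim emb (f ` X)"
proof -
  obtain F where F: "finite F" "V.span F = X" using X unfolding kfindim_def by blast
  then have "V.span (f ` F) = f ` X" using module_hom.span_image[OF f] by metis
  then show ?thesis unfolding kfindim_def using F(1) V.subspace_span by (metis finite_imageI)
qed

lemma dim_image_inj:
  assumes f: "module_hom (kscale emb) (kscale emb) f" and "inj f"
  shows "V.dim (f ` X) = V.dim X"
proof -
  obtain B where B: "B \<subseteq> X" "V.independent B" "X \<subseteq> V.span B" "card B = V.dim X"
    using V.basis_exists[of X] by metis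
  have inj: "inj_on f Y" for Y using \<open>inj f\<close> by (rule inj_on_subset) simp
  have "V.independent (f ` B)" using module_hom.independent_injective_image[OF f B(2) inj] .
  moreover have "f ` X \<subseteq> V.span (f ` B)" using module_hom.spans_image[OF f B(3)] .
  ultimately have "card (f ` B) = V.dim (f ` X)"
    using V.basis_card_eq_dim[OF image_mono[OF B(1)]] by blast
  moreover have "card (f ` B) = card B" using card_image[OF inj] .
  ultimately show ?thesis using B(4) by simp
qed

lemma kfindim_sum_space:
  assumes "kfindim emb S" "kfindim emb T"
  shows "kfindim emb (sum_space S T)"
proof -
  obtain F G where "finite F" "V.span F = S" "finite G" "V.span G = T"
    using assms unfolding kfindim_def by metis
  then have "V.span (F \<union> G) = sum_space S T" unfolding sum_space_def V.span_Un by simp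
  then show ?thesis unfolding kfindim_def
    using \<open>finite F\<close> \<open>finite G\<close> V.subspace_span by (metis finite_UnI)
qed

lemma kfindim_Int:
  assumes "kfindim emb S" "V.subspace T"
  shows "kfindim emb (S \<inter> T)"
  using kfindim_subset[OF assms(1) V.subspace_inter[OF kfindim_subspace[OF assms(1)] assms(2)]]
  by blast

lemma span_Int_span_diff:
  assumes C: "V.independent C" and "B \<subseteq> C"
  shows "V.span B \<inter> V.span (C - B) \<subseteq> {0}"
proof
  fix z assume z: "z \<in> V.span B \<inter> V.span (C - B)"
  have "V.representation C z b = 0" for b
  proof -
    have "V.representation C z b = V.representation B z b"
      using V.representation_extend[OF C _ \<open>B \<subseteq> C\<close>] z by simp
    moreover have "V.representation C z b = V.representation (C - B) z b"
      using V.representation_extend[OF C, of z "C - B"] z by auto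
    ultimately show ?thesis
      using V.representation_ne_zero[of B z b] V.representation_ne_zero[of "C - B" z b] by auto
  qed
  moreover have "z \<in> V.span C" using z V.span_mono[of B C] \<open>B \<subseteq> C\<close> by blast
  ultimately show "z \<in> {0}" using V.sum_nonzero_representation_eq[OF C] by force
qed

lemma independent_Un:
  assumes "V.independent X" "V.independent Y" "V.span X \<inter> V.span Y \<subseteq> {0}"
  shows "V.independent (X \<union> Y)"
proof -
  have not_redundant: "a \<notin> V.span ((X \<union> Y) - {a})"
    if X: "V.independent X" and "V.span X \<inter> V.span Y \<subseteq> {0}" and "a \<in> X" for X Y a
  proof
    assume "a \<in> V.span ((X \<union> Y) - {a})"
    then obtain u v where uv: "a = u + v" "u \<in> V.span (X - {a})" "v \<in> V.span (Y - {a})"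
      unfolding Un_Diff V.span_Un by blast
    have "v = a - u" using uv(1) by simp
    then have "v \<in> V.span X"
      using V.span_diff[OF V.span_base[OF \<open>a \<in> X\<close>]] uv(2) V.span_mono[of "X - {a}" X] by blast
    moreover have "v \<in> V.span Y" using uv(3) V.span_mono[of "Y - {a}" Y] by blast
    ultimately have "v = 0" using that(2) by blast
    then have "a \<in> V.span (X - {a})" using uv by simp
    then show False using X \<open>a \<in> X\<close> V.dependent_def by blast
  qed
  show ?thesis
    unfolding V.dependent_def
    using not_redundant[OF assms(1,3)] not_redundant[OF assms(2), of X] assms(3)
    by (metis Int_commute Un_commute Un_iff)
qed

text \<open>The modular inequality for finite-dimensional subspaces (the library's
  \<open>dim_sums_Int\<close> needs the whole space to be finite-dimensional).\<close>
lemma dim_modular: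
  assumes S: "kfindim emb S" and T: "kfindim emb T"
  shows "V.dim S + V.dim T \<le> V.dim (sum_space S T) + V.dim (S \<inter> T)"
proof -
  obtain B where B: "B \<subseteq> S \<inter> T" "V.independent B" "S \<inter> T \<subseteq> V.span B"
    "card B = V.dim (S \<inter> T)"
    using V.basis_exists[of "S \<inter> T"] by metis
  obtain C where C: "B \<subseteq> C" "C \<subseteq> S" "V.independent C" "S \<subseteq> V.span C"
    using V.maximal_independent_subset_extend[of B S] B(1,2) by blast
  obtain D where D: "finite D" "D \<subseteq> T" "V.independent D" "V.span D = T" "card D = V.dim T"
    using kfindim_basis[OF T] by blast
  have finC: "finite C" and cardC: "card C = V.dim S"
    using independent_card_le_dim[OF S C(3,2)] V.basis_card_eq_dim[OF C(2,4,3)] by auto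
  have sub: "V.subspace S" "V.subspace T" using S T by (simp_all add: kfindim_subspace)
  have "V.span D \<inter> V.span (C - B) \<subseteq> V.span B \<inter> V.span (C - B)"
    using D(4) B(3) V.span_minimal[OF order_trans[OF C(2)] sub(1)] V.span_mono[of "C - B" C]
    by blast
  also have "\<dots> \<subseteq> {0}" using span_Int_span_diff[OF C(3,1)] .
  finally have disj: "V.span D \<inter> V.span (C - B) \<subseteq> {0}" .
  have indep: "V.independent (D \<union> (C - B))"
    using independent_Un[OF D(3) V.independent_mono[OF C(3)] disj] by blast
  have "D \<inter> (C - B) = {}"
    using disj V.span_superset[of D] V.span_superset[of "C - B"] V.dependent_zero[of "C - B"]
      V.independent_mono[OF C(3), of "C - B"] by blast
  then have "card (D \<union> (C - B)) = card D + card (C - B)"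
    using finC D(1) by (simp add: card_Un_disjoint)
  also have "\<dots> = V.dim T + (V.dim S - V.dim (S \<inter> T))"
    using card_Diff_subset[OF finite_subset[OF C(1) finC] C(1)] cardC B(4) D(5) by simp
  finally have "card (D \<union> (C - B)) = V.dim T + (V.dim S - V.dim (S \<inter> T))" .
  moreover have "D \<union> (C - B) \<subseteq> sum_space S T"
    using D(2) C(2) V.subspace_0[OF sub(1)] V.subspace_0[OF sub(2)]
    unfolding sum_space_def by force
  then have "card (D \<union> (C - B)) \<le> V.dim (sum_space S T)"
    using independent_card_le_dim[OF kfindim_sum_space[OF S T] indep] by blast
  moreover have "V.dim (S \<inter> T) \<le> V.dim S" using dim_mono[OF S] by blast
  ultimately show ?thesis by linarith
qed

section \<open>Multiplication maps and stabilizers\<close>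

text \<open>Left and right multiplications are K-linear, since K is central.\<close>
lemma lmult_hom: "module_hom (kscale emb) (kscale emb) (\<lambda>x. u * x)"
  by unfold_locales (simp_all add: kscale_def distrib_left emb_central mult.assoc)

lemma rmult_hom: "module_hom (kscale emb) (kscale emb) (\<lambda>x. x * u)"
  by unfold_locales (simp_all add: kscale_def distrib_right mult.assoc)

lemma inj_lmult:
  fixes u :: 'l assumes "u \<noteq> 0" shows "inj (\<lambda>x. u * x)"
proof (rule injI)
  fix x y assume "u * x = u * y"
  then have "inverse u * (u * x) = inverse u * (u * y)" by simp
  then show "x = y" using assms by (simp flip: mult.assoc)
qed

lemma inj_rmult:
  fixes u :: 'l assumes "u \<noteq> 0" shows "inj (\<lambda>x. x * u)"
proof (rule injI)
  fix x y assume "x * u = y * u"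
  then have "x * u * inverse u = y * u * inverse u" by simp
  then show "x = y" using assms by (simp add: mult.assoc)
qed

lemma dim_lmult: "u \<noteq> 0 \<Longrightarrow> V.dim ((\<lambda>x. u * x) ` X) = V.dim X"
  using dim_image_inj[OF lmult_hom inj_lmult] .

lemma dim_rmult: "u \<noteq> 0 \<Longrightarrow> V.dim ((\<lambda>x. x * u) ` X) = V.dim X"
  using dim_image_inj[OF rmult_hom inj_rmult] .

lemma inj_endo_onto:
  assumes f: "module_hom (kscale emb) (kscale emb) f" "inj f"
    and S: "kfindim emb S" and into: "f ` S \<subseteq> S"
  shows "f ` S = S"
  using subspace_eq_of_dim_le[OF S module_hom.subspace_image[OF f(1) kfindim_subspace[OF S]] into]
    dim_image_inj[OF f] by simp

text \<open>A subspace containing 1 and closed under products and inverses is a division ring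
  over K; it contains K because it contains \<open>emb k = kscale emb k 1\<close>.\<close>
lemma sub_division_ring_overI:
  assumes H: "V.subspace H" "1 \<in> H"
    and mult: "\<And>x y. x \<in> H \<Longrightarrow> y \<in> H \<Longrightarrow> x * y \<in> H"
    and inv: "\<And>x. x \<in> H \<Longrightarrow> x \<noteq> 0 \<Longrightarrow> inverse x \<in> H"
  shows "sub_division_ring_over emb H"
proof -
  have "emb k \<in> H" for k using V.subspace_scale[OF H, of k] by (simp add: kscale_def)
  then have "range emb \<subseteq> H" by blast
  then show ?thesis
    unfolding sub_division_ring_over_def
    using H(2) mult inv V.subspace_0[OF H(1)] V.subspace_add[OF H(1)] V.subspace_neg[OF H(1)]
    by simp
qed

text \<open>The right stabilizer of a nonzero finite-dimensional subspace S is a division ring over K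
  of finite dimension: it is a subspace, it embeds into S by left multiplication with a nonzero
  element of S, and right multiplication by a nonzero stabilizing element permutes S.\<close>
lemma right_stabilizer_division_ring:
  assumes S: "kfindim emb S" "S \<noteq> {0}"
  shows "sub_division_ring_over emb (right_stabilizer S)" "kfindim emb (right_stabilizer S)"
proof -
  let ?R = "right_stabilizer S"
  have subS: "V.subspace S" using kfindim_subspace[OF S(1)] .
  have "?R = (\<Inter>s\<in>S. {x. s * x \<in> S})" unfolding right_stabilizer_def by blast
  then have sub: "V.subspace ?R"
    by (simp only:) (rule V.subspace_Int, rule module_hom.subspace_linear_preimage[OF lmult_hom subS])
  obtain s0 where s0: "s0 \<in> S" "s0 \<noteq> 0" using nonzero_elem[OF subS S(2)] .
  have "?R \<subseteq> (\<lambda>y. inverse s0 * y) ` S"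
  proof
    fix x assume "x \<in> ?R"
    then have "s0 * x \<in> S" using s0(1) unfolding right_stabilizer_def by blast
    moreover have "x = inverse s0 * (s0 * x)" using s0(2) by (simp flip: mult.assoc)
    ultimately show "x \<in> (\<lambda>y. inverse s0 * y) ` S" by (rule rev_image_eqI)
  qed
  then show "kfindim emb ?R" using kfindim_subset[OF kfindim_image[OF lmult_hom S(1)] sub] by blast
  have inv: "inverse x \<in> ?R" if x: "x \<in> ?R" "x \<noteq> 0" for x
  proof -
    have "(\<lambda>s. s * x) ` S \<subseteq> S" using x(1) unfolding right_stabilizer_def by blast
    then have onto: "(\<lambda>s. s * x) ` S = S"
      using inj_endo_onto[OF rmult_hom inj_rmult[OF x(2)] S(1)] by blast
    have "s * inverse x \<in> S" if "s \<in> S" for s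
    proof -
      obtain t where "t \<in> S" "s = t * x" using \<open>s \<in> S\<close> onto by blast
      then show ?thesis using x(2) by (simp add: mult.assoc)
    qed
    then show ?thesis unfolding right_stabilizer_def by blast
  qed
  have mult: "x * y \<in> ?R" if "x \<in> ?R" "y \<in> ?R" for x y
    using that unfolding right_stabilizer_def by (simp flip: mult.assoc)
  have one: "1 \<in> ?R" unfolding right_stabilizer_def by simp
  show "sub_division_ring_over emb ?R" by (rule sub_division_ring_overI[OF sub one mult inv])
qed

lemma left_stabilizer_division_ring:
  assumes S: "kfindim emb S" "S \<noteq> {0}"
  shows "sub_division_ring_over emb (left_stabilizer S)" "kfindim emb (left_stabilizer S)"
proof -
  let ?L = "left_stabilizer S"
  have subS: "V.subspace S" using kfindim_subspace[OF S(1)] .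
  have "?L = (\<Inter>s\<in>S. {x. x * s \<in> S})" unfolding left_stabilizer_def by blast
  then have sub: "V.subspace ?L"
    by (simp only:) (rule V.subspace_Int, rule module_hom.subspace_linear_preimage[OF rmult_hom subS])
  obtain s0 where s0: "s0 \<in> S" "s0 \<noteq> 0" using nonzero_elem[OF subS S(2)] .
  have "?L \<subseteq> (\<lambda>y. y * inverse s0) ` S"
  proof
    fix x assume "x \<in> ?L"
    then have "x * s0 \<in> S" using s0(1) unfolding left_stabilizer_def by blast
    moreover have "x = (x * s0) * inverse s0" using s0(2) by (simp add: mult.assoc)
    ultimately show "x \<in> (\<lambda>y. y * inverse s0) ` S" by (rule rev_image_eqI)
  qed
  then show "kfindim emb ?L" using kfindim_subset[OF kfindim_image[OF rmult_hom S(1)] sub] by blast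
  have inv: "inverse x \<in> ?L" if x: "x \<in> ?L" "x \<noteq> 0" for x
  proof -
    have "(\<lambda>s. x * s) ` S \<subseteq> S" using x(1) unfolding left_stabilizer_def by blast
    then have onto: "(\<lambda>s. x * s) ` S = S"
      using inj_endo_onto[OF lmult_hom inj_lmult[OF x(2)] S(1)] by blast
    have "inverse x * s \<in> S" if "s \<in> S" for s
    proof -
      obtain t where "t \<in> S" "s = x * t" using \<open>s \<in> S\<close> onto by blast
      then show ?thesis using x(2) by (simp flip: mult.assoc)
    qed
    then show ?thesis unfolding left_stabilizer_def by blast
  qed
  have mult: "x * y \<in> ?L" if "x \<in> ?L" "y \<in> ?L" for x y
    using that unfolding left_stabilizer_def by (simp add: mult.assoc)
  have one: "1 \<in> ?L" unfolding left_stabilizer_def by simp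
  show "sub_division_ring_over emb ?L" by (rule sub_division_ring_overI[OF sub one mult inv])
qed

lemma left_stabilizer_span: "left_stabilizer X \<subseteq> left_stabilizer (V.span X)"
proof
  fix u assume "u \<in> left_stabilizer X"
  then have "X \<subseteq> {t. u * t \<in> V.span X}"
    unfolding left_stabilizer_def using V.span_superset by blast
  then have "V.span X \<subseteq> {t. u * t \<in> V.span X}"
    by (rule V.span_minimal[OF _ module_hom.subspace_linear_preimage[OF lmult_hom V.subspace_span]])
  then show "u \<in> left_stabilizer (V.span X)" unfolding left_stabilizer_def by blast
qed

lemma mult_span:
  assumes "x \<in> V.span X" "y \<in> V.span Y"
  shows "x * y \<in> V.span (setmult X Y)"
proof -
  have left: "t * u \<in> V.span (setmult X Y)" if "t \<in> X" "u \<in> V.span Y" for t u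
  proof -
    have "t * u \<in> (\<lambda>u. t * u) ` V.span Y" using that(2) by (rule imageI)
    also have "\<dots> = V.span ((\<lambda>u. t * u) ` Y)"
      by (rule module_hom.span_image[OF lmult_hom, symmetric])
    also have "\<dots> \<subseteq> V.span (setmult X Y)"
      by (rule V.span_mono) (use that(1) in \<open>unfold setmult_def, blast\<close>)
    finally show ?thesis .
  qed
  have "x * y \<in> (\<lambda>t. t * y) ` V.span X" using assms(1) by (rule imageI)
  also have "\<dots> = V.span ((\<lambda>t. t * y) ` X)"
    by (rule module_hom.span_image[OF rmult_hom, symmetric])
  also have "\<dots> \<subseteq> V.span (setmult X Y)"
    by (rule V.span_minimal[OF _ V.subspace_span]) (use left assms(2) in blast)
  finally show ?thesis .
qed

lemma kfindim_span_setmult: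
  assumes "kfindim emb A" "kfindim emb B"
  shows "kfindim emb (V.span (setmult A B))"
proof -
  obtain F G where F: "finite F" "V.span F = A" and G: "finite G" "V.span G = B"
    using assms unfolding kfindim_def by metis
  have "setmult F G = (\<lambda>(x, y). x * y) ` (F \<times> G)" unfolding setmult_def by auto
  then have "finite (setmult F G)" using F(1) G(1) by simp
  then have fd: "kfindim emb (V.span (setmult F G))"
    unfolding kfindim_def by (intro conjI exI[of _ "setmult F G"]) simp_all
  have "setmult A B \<subseteq> V.span (setmult F G)"
  proof
    fix z assume "z \<in> setmult A B"
    then obtain x y where "z = x * y" "x \<in> A" "y \<in> B" unfolding setmult_def by blast
    then show "z \<in> V.span (setmult F G)" using mult_span[of x F y G] F(2) G(2) by simp
  qed
  then have "V.span (setmult A B) \<subseteq> V.span (setmult F G)"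
    by (rule V.span_minimal[OF _ V.subspace_span])
  then show ?thesis using kfindim_subset[OF fd V.subspace_span] by blast
qed

section \<open>The e-transform\<close>

lemma transform_products:
  assumes C: "V.subspace C" and AB: "setmult A B \<subseteq> C"
  shows "setmult (ext_right A g) (restr_left B g) \<subseteq> C"
    and "setmult (restr_right A g) (ext_left B g) \<subseteq> C"
proof -
  have prod: "x * y \<in> C" if "x \<in> A" "y \<in> B" for x y
    using AB that unfolding setmult_def by blast
  show "setmult (ext_right A g) (restr_left B g) \<subseteq> C"
  proof (clarsimp simp: setmult_def ext_right_def restr_left_def sum_space_def)
    fix x a y assume "x \<in> A" "a \<in> A" "y \<in> B" "g * y \<in> B"
    then have "x * y + a * (g * y) \<in> C" using V.subspace_add[OF C] prod by blast
    then show "(x + a * g) * y \<in> C" by (simp add: distrib_right mult.assoc)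
  qed
  show "setmult (restr_right A g) (ext_left B g) \<subseteq> C"
  proof (clarsimp simp: setmult_def restr_right_def ext_left_def sum_space_def)
    fix x y b assume "x \<in> A" "x * g \<in> A" "y \<in> B" "b \<in> B"
    then have "x * y + (x * g) * b \<in> C" using V.subspace_add[OF C] prod by blast
    then show "x * (y + g * b) \<in> C" by (simp add: distrib_left mult.assoc)
  qed
qed

lemma kfindim_transforms:
  assumes A: "kfindim emb A" and B: "kfindim emb B"
  shows "kfindim emb (ext_right A g)" "kfindim emb (restr_right A g)"
    and "kfindim emb (restr_left B g)" "kfindim emb (ext_left B g)"
proof -
  show "kfindim emb (ext_right A g)"
    unfolding ext_right_def by (rule kfindim_sum_space[OF A kfindim_image[OF rmult_hom A]])
  show "kfindim emb (ext_left B g)"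
    unfolding ext_left_def by (rule kfindim_sum_space[OF B kfindim_image[OF lmult_hom B]])
  have "restr_right A g = A \<inter> {x. x * g \<in> A}" unfolding restr_right_def by blast
  then show "kfindim emb (restr_right A g)"
    using kfindim_Int[OF A module_hom.subspace_linear_preimage[OF rmult_hom kfindim_subspace[OF A]]]
    by simp
  have "restr_left B g = B \<inter> {y. g * y \<in> B}" unfolding restr_left_def by blast
  then show "kfindim emb (restr_left B g)"
    using kfindim_Int[OF B module_hom.subspace_linear_preimage[OF lmult_hom kfindim_subspace[OF B]]]
    by simp
qed

lemma subset_transforms:
  assumes "V.subspace A" "V.subspace B"
  shows "A \<subseteq> ext_right A g" "B \<subseteq> ext_left B g"
proof -
  have "x = x + 0 * g" "x = x + g * 0" for x by simp_all
  then show "A \<subseteq> ext_right A g" "B \<subseteq> ext_left B g"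
    unfolding ext_right_def ext_left_def sum_space_def
    using V.subspace_0[OF assms(1)] V.subspace_0[OF assms(2)] by blast+
qed

text \<open>The e-transform does not lose dimension: this is the modular inequality applied to
  A and Ag, where \<open>restr_right A g\<close> is carried onto \<open>A \<inter> Ag\<close> by right multiplication by g.\<close>
lemma dim_transform_right:
  assumes A: "kfindim emb A" and g: "g \<noteq> 0"
  shows "2 * V.dim A \<le> V.dim (ext_right A g) + V.dim (restr_right A g)"
proof -
  let ?Ag = "(\<lambda>a. a * g) ` A"
  have "(\<lambda>x. x * g) ` restr_right A g = A \<inter> ?Ag" unfolding restr_right_def by blast
  then have "V.dim (restr_right A g) = V.dim (A \<inter> ?Ag)" using dim_rmult[OF g] by metis
  moreover have "V.dim ?Ag = V.dim A" using dim_rmult[OF g] .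
  ultimately show ?thesis
    using dim_modular[OF A kfindim_image[OF rmult_hom[of g] A]] unfolding ext_right_def by simp
qed

lemma dim_transform_left:
  assumes B: "kfindim emb B" and g: "g \<noteq> 0"
  shows "2 * V.dim B \<le> V.dim (restr_left B g) + V.dim (ext_left B g)"
proof -
  let ?gB = "(\<lambda>b. g * b) ` B"
  have "(\<lambda>y. g * y) ` restr_left B g = B \<inter> ?gB" unfolding restr_left_def by blast
  then have "V.dim (restr_left B g) = V.dim (B \<inter> ?gB)" using dim_lmult[OF g] by metis
  moreover have "V.dim ?gB = V.dim B" using dim_lmult[OF g] .
  ultimately show ?thesis
    using dim_modular[OF B kfindim_image[OF lmult_hom[of g] B]] unfolding ext_left_def by simp
qed

section \<open>The induction\<close>

definition kneser_bound :: "'l set \<Rightarrow> 'l set \<Rightarrow> 'l set \<Rightarrow> bool" where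
  "kneser_bound C A B \<longleftrightarrow> (\<exists>S H. kfindim emb S \<and> S \<subseteq> C
     \<and> sub_division_ring_over emb H \<and> kfindim emb H
     \<and> V.dim A + V.dim B \<le> V.dim S + V.dim H
     \<and> (setmult H S = S \<or> setmult S H = S))"

lemma kneser_bound_mono:
  assumes "kneser_bound C A' B'" and "V.dim A + V.dim B \<le> V.dim A' + V.dim B'"
  shows "kneser_bound C A B"
proof -
  obtain S H where "kfindim emb S \<and> S \<subseteq> C \<and> sub_division_ring_over emb H \<and> kfindim emb H
      \<and> (setmult H S = S \<or> setmult S H = S)" and "V.dim A' + V.dim B' \<le> V.dim S + V.dim H"
    using assms(1) unfolding kneser_bound_def by blast
  with assms(2) show ?thesis unfolding kneser_bound_def by (intro exI[of _ S] exI[of _ H]) simp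
qed

definition admissible :: "'l set \<Rightarrow> 'l set \<Rightarrow> 'l set \<Rightarrow> bool" where
  "admissible C A B \<longleftrightarrow> kfindim emb A \<and> kfindim emb B \<and> A \<noteq> {0} \<and> B \<noteq> {0}
     \<and> setmult A B \<subseteq> C"

lemma admissible_elems:
  assumes adm: "admissible C A B"
  obtains a b where "a \<in> A" "a \<noteq> 0" "b \<in> B" "b \<noteq> 0"
  using adm nonzero_elem[OF kfindim_subspace] unfolding admissible_def by metis

lemma admissible_dim_le:
  assumes C: "kfindim emb C" and adm: "admissible C A B"
  shows "V.dim A \<le> V.dim C" "V.dim B \<le> V.dim C"
proof -
  have AB: "setmult A B \<subseteq> C" using adm unfolding admissible_def by blast
  obtain a b where a: "a \<in> A" "a \<noteq> 0" and b: "b \<in> B" "b \<noteq> 0"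
    using admissible_elems[OF adm] .
  have "(\<lambda>x. x * b) ` A \<subseteq> C" "(\<lambda>y. a * y) ` B \<subseteq> C"
    using AB a(1) b(1) unfolding setmult_def by blast+
  then show "V.dim A \<le> V.dim C" "V.dim B \<le> V.dim C"
    using dim_mono[OF C] dim_rmult[OF b(2), of A] dim_lmult[OF a(2), of B] by metis+
qed

text \<open>First terminal case: if \<open>Ag \<subseteq> A\<close> whenever \<open>gB \<inter> B \<noteq> 0\<close>, then \<open>S = Ab\<close> is stable
  under its right stabilizer, which contains \<open>b\<^sup>-\<^sup>1B\<close>.\<close>
lemma kneser_bound_right_stable:
  assumes adm: "admissible C A B"
    and stable: "\<And>g. restr_left B g \<noteq> {0} \<Longrightarrow> restr_right A g = A"
  shows "kneser_bound C A B"
proof -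
  have A: "kfindim emb A" and AB: "setmult A B \<subseteq> C"
    using adm unfolding admissible_def by blast+
  obtain a b where a: "a \<in> A" "a \<noteq> 0" and b: "b \<in> B" "b \<noteq> 0"
    using admissible_elems[OF adm] .
  let ?S = "(\<lambda>x. x * b) ` A"
  let ?H = "right_stabilizer ?S"
  have S: "kfindim emb ?S" using kfindim_image[OF rmult_hom A] .
  have "a * b \<in> ?S" "a * b \<noteq> 0" using a b by auto
  then have "?S \<noteq> {0}" by blast
  note H = right_stabilizer_division_ring[OF S this]
  have SC: "?S \<subseteq> C" using AB b(1) unfolding setmult_def by blast
  have invB: "(\<lambda>y. inverse b * y) ` B \<subseteq> ?H"
    using right_stabilizer_of_stable[OF b stable] .
  have "V.dim B \<le> V.dim ?H"
    using dim_mono[OF H(2) invB] dim_lmult[of "inverse b" B] b(2) by simp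
  moreover have "V.dim ?S = V.dim A" using dim_rmult[OF b(2)] .
  ultimately show ?thesis
    unfolding kneser_bound_def using S SC H setmult_right_stabilizer[of ?S]
    by (intro exI[of _ ?S] exI[of _ ?H]) auto
qed

text \<open>Second terminal case: if \<open>Ag \<subseteq> A\<close> whenever \<open>Ag \<inter> A \<noteq> 0\<close>, then \<open>S = \<langle>AB\<rangle>\<close> is
  stable under its left stabilizer, which contains \<open>Aa\<^sup>-\<^sup>1\<close>.\<close>
lemma kneser_bound_left_stable:
  assumes C: "V.subspace C" and adm: "admissible C A B"
    and stable: "\<And>g. restr_right A g \<noteq> {0} \<Longrightarrow> restr_right A g = A"
  shows "kneser_bound C A B"
proof -
  have A: "kfindim emb A" and B: "kfindim emb B" and AB: "setmult A B \<subseteq> C"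
    using adm unfolding admissible_def by blast+
  obtain a b where a: "a \<in> A" "a \<noteq> 0" and b: "b \<in> B" "b \<noteq> 0"
    using admissible_elems[OF adm] .
  let ?S = "V.span (setmult A B)"
  let ?H = "left_stabilizer ?S"
  have S: "kfindim emb ?S" using kfindim_span_setmult[OF A B] .
  have "a * b \<in> ?S" using V.span_base[OF setmultI[OF a(1) b(1)]] .
  moreover have "a * b \<noteq> 0" using a b by simp
  ultimately have "?S \<noteq> {0}" by blast
  note H = left_stabilizer_division_ring[OF S this]
  have SC: "?S \<subseteq> C" using V.span_minimal[OF AB C] .
  have aB: "(\<lambda>y. a * y) ` B \<subseteq> ?S" using V.span_base[OF setmultI[OF a(1)]] by blast
  have dim_S: "V.dim B \<le> V.dim ?S" using dim_mono[OF S aB] dim_lmult[OF a(2), of B] by simp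
  have Ainv: "(\<lambda>x. x * inverse a) ` A \<subseteq> ?H"
    using left_stabilizer_of_stable[OF a stable, of B] left_stabilizer_span[of "setmult A B"] by blast
  have "V.dim A \<le> V.dim ?H"
    using dim_mono[OF H(2) Ainv] dim_rmult[of "inverse a" A] a(2) by simp
  then show ?thesis
    unfolding kneser_bound_def using S SC H dim_S setmult_left_stabilizer[of ?S]
    by (intro exI[of _ ?S] exI[of _ ?H]) auto
qed

definition improves :: "'l set \<Rightarrow> 'l set \<Rightarrow> 'l set \<Rightarrow> 'l set \<Rightarrow> bool" where
  "improves A' B' A B \<longleftrightarrow> V.dim A + V.dim B < V.dim A' + V.dim B'
     \<or> (V.dim A' + V.dim B' = V.dim A + V.dim B \<and> V.dim B' < V.dim B)"

lemma stuck_transform: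
  assumes C: "V.subspace C" and adm: "admissible C A B" and g: "restr_right A g \<noteq> A"
    and IH: "\<And>A' B'. admissible C A' B' \<Longrightarrow> improves A' B' A B \<Longrightarrow> kneser_bound C A' B'"
    and fail: "\<not> kneser_bound C A B"
  shows "restr_left B g \<noteq> {0} \<Longrightarrow> V.dim A < V.dim B"
    and "restr_right A g \<noteq> {0} \<Longrightarrow> V.dim B < V.dim A"
proof -
  have A: "kfindim emb A" and B: "kfindim emb B" and AB: "setmult A B \<subseteq> C" and "A \<noteq> {0}"
    using adm unfolding admissible_def by blast+
  have "g \<noteq> 0"
    using g V.subspace_0[OF kfindim_subspace[OF A]] unfolding restr_right_def by auto
  note kf = kfindim_transforms[OF A B, of g]
  note sub = subset_transforms[OF kfindim_subspace[OF A] kfindim_subspace[OF B], of g]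
  note prods = transform_products[OF C AB, of g]
  have no_improvement: "\<not> improves A' B' A B" if "admissible C A' B'" for A' B'
    using IH[OF that] kneser_bound_mono[of C A' B' A B] fail unfolding improves_def by auto
  have "ext_right A g \<noteq> {0}" using sub(1) \<open>A \<noteq> {0}\<close> V.subspace_0[OF kfindim_subspace[OF A]] by blast
  then have first: "\<not> improves (ext_right A g) (restr_left B g) A B" if "restr_left B g \<noteq> {0}"
    using no_improvement kf prods(1) that unfolding admissible_def by blast
  have "ext_left B g \<noteq> {0}"
    using sub(2) adm V.subspace_0[OF kfindim_subspace[OF B]] unfolding admissible_def by blast
  then have second: "\<not> improves (restr_right A g) (ext_left B g) A B" if "restr_right A g \<noteq> {0}"
    using no_improvement kf prods(2) that unfolding admissible_def by blast
  have dimA: "2 * V.dim A \<le> V.dim (ext_right A g) + V.dim (restr_right A g)"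
    using dim_transform_right[OF A \<open>g \<noteq> 0\<close>] .
  have dimB: "2 * V.dim B \<le> V.dim (restr_left B g) + V.dim (ext_left B g)"
    using dim_transform_left[OF B \<open>g \<noteq> 0\<close>] .
  have "restr_right A g \<subset> A" using g unfolding restr_right_def by blast
  then have proper: "V.dim (restr_right A g) < V.dim A"
    using dim_less_of_psubset[OF A kfindim_subspace[OF kf(2)]] by blast
  show "V.dim A < V.dim B" if "restr_left B g \<noteq> {0}"
    using first[OF that] second dimA dimB proper dim_pos_iff[OF kf(2)] dim_pos_iff[OF kf(3)] that
    unfolding improves_def by linarith
  show "V.dim B < V.dim A" if "restr_right A g \<noteq> {0}"
    using first second[OF that] dimA dimB proper dim_pos_iff[OF kf(2)] dim_pos_iff[OF kf(3)] that
    unfolding improves_def by linarith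
qed

text \<open>The induction step: either one of the two terminal cases applies, or there are g1, g2
  whose e-transforms force both \<open>dim A < dim B\<close> and \<open>dim B < dim A\<close>.\<close>
lemma kneser_step:
  assumes C: "V.subspace C" and adm: "admissible C A B"
    and IH: "\<And>A' B'. admissible C A' B' \<Longrightarrow> improves A' B' A B \<Longrightarrow> kneser_bound C A' B'"
  shows "kneser_bound C A B"
proof (rule ccontr)
  assume fail: "\<not> kneser_bound C A B"
  obtain g1 where g1: "restr_left B g1 \<noteq> {0}" "restr_right A g1 \<noteq> A"
    using kneser_bound_right_stable[OF adm] fail by blast
  obtain g2 where g2: "restr_right A g2 \<noteq> {0}" "restr_right A g2 \<noteq> A"
    using kneser_bound_left_stable[OF C adm] fail by blast
  have "V.dim A < V.dim B" using stuck_transform(1)[OF C adm g1(2) IH fail g1(1)] .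
  moreover have "V.dim B < V.dim A" using stuck_transform(2)[OF C adm g2(2) IH fail g2(1)] .
  ultimately show False by simp
qed

lemma kneser_bound_admissible:
  assumes C: "kfindim emb C"
  shows "admissible C A B \<Longrightarrow> kneser_bound C A B"
  using wf_measures[of "[\<lambda>(A, B). 2 * V.dim C - (V.dim A + V.dim B), \<lambda>(A, B). V.dim B]"]
proof (induction "(A, B)" arbitrary: A B rule: wf_induct_rule)
  case (less A B)
  show ?case
  proof (rule kneser_step[OF kfindim_subspace[OF C] less.prems])
    fix A' B' assume adm': "admissible C A' B'" and "improves A' B' A B"
    then have "((A', B'), (A, B)) \<in> measures
        [\<lambda>(A, B). 2 * V.dim C - (V.dim A + V.dim B), \<lambda>(A, B). V.dim B]"
      using admissible_dim_le[OF C adm'] admissible_dim_le[OF C less.prems]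
      unfolding improves_def by (auto simp: in_measures)
    then show "kneser_bound C A' B'" using less.hyps adm' by blast
  qed
qed

end

theorem mainTheorem6:
  fixes emb :: "'k::field \<Rightarrow> 'l::division_ring"
    and A B :: "'l set"
  assumes "central_field_emb emb"
    and "kfindim emb A" and "A \<noteq> {0}"
    and "kfindim emb B" and "B \<noteq> {0}"
  shows "\<exists>S H. module.subspace (kscale emb) S
     \<and> S \<subseteq> module.span (kscale emb) (setmult A B)
     \<and> kfindim emb S
     \<and> sub_division_ring_over emb H \<and> kfindim emb H
     \<and> int (vector_space.dim (kscale emb) S) \<ge>
          int (vector_space.dim (kscale emb) A) + int (vector_space.dim (kscale emb) B)
          - int (vector_space.dim (kscale emb) H)
     \<and> (setmult H S = S \<or> setmult S H = S)"
proof -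
  interpret division_algebra_over emb by unfold_locales (rule assms(1))
  let ?C = "V.span (setmult A B)"
  have "admissible ?C A B" using assms(2-5) V.span_superset unfolding admissible_def by blast
  then have "kneser_bound ?C A B"
    by (rule kneser_bound_admissible[OF kfindim_span_setmult[OF assms(2,4)]])
  then obtain S H where "kfindim emb S" "S \<subseteq> ?C" "sub_division_ring_over emb H" "kfindim emb H"
    "V.dim A + V.dim B \<le> V.dim S + V.dim H" "setmult H S = S \<or> setmult S H = S"
    unfolding kneser_bound_def by blast
  then show ?thesis using kfindim_subspace by (intro exI[of _ S] exI[of _ H]) auto
qed

end
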